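(* For polarization $a$, intensity $\mu>0$ and flag $z$, let $\sigma_{(a,\mu,z)}=\sum_{N=0}^\infty e^{-\mu}\frac{\mu^N}{N!}|N\rangle\langle N|_a$ and $$\xi_{(a,\mu,z)}=\sum_{N=0}^{N_{\mathrm{decoy}}}e^{-\mu}\frac{\mu^N}{N!}|N\rangle\langle N|_a+\Big(1-\sum_{N=0}^{N_{\mathrm{decoy}}}e^{-\mu}\frac{\mu^N}{N!}\Big)|a,\mu\rangle\langle a,\mu|,$$ where $\{|a,\mu\rangle\}_{a,\mu}$ is an orthonormal set orthogonal to the span of all $|N\rangle_a$ with $N\le N_{\mathrm{decoy}}$. Then there is a channel $\Psi_{\mathrm{tag}}$ with $\Psi_{\mathrm{tag}}[\xi_{(a,\mu,z)}]=\sigma_{(a,\mu,z)}$ for all setting choices $(a,\mu,z)$.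
   Context: $|N\rangle_a$ denotes the Fock state of $N$ photons all with polarization $a$ (from a finite set of polarizations); the set of intensities is finite; $N_{\mathrm{decoy}}\in\mathbb N$. *)

theory Defs
  imports "HOL-Analysis.Analysis" "HOL-Library.Countable"
begin

text \<open>Density operators are represented by their matrix elements
  <e_i| rho |e_j> with respect to the standard orthonormal basis.\<close>

definition l2 :: "('i \<Rightarrow> complex) \<Rightarrow> bool" where
  "l2 x \<longleftrightarrow> (\<lambda>i. (cmod (x i))^2) summable_on UNIV"

definition l2norm :: "('i \<Rightarrow> complex) \<Rightarrow> real" where
  "l2norm x = sqrt (\<Sum>\<^sub>\<infinity>i. (cmod (x i))^2)"

definition cinner :: "('i \<Rightarrow> complex) \<Rightarrow> ('i \<Rightarrow> complex) \<Rightarrow> complex" where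
  "cinner x y = (\<Sum>\<^sub>\<infinity>i. cnj (x i) * y i)"

text \<open>Quantum channel on l2(I), given in Kraus form: a countable family of linear maps
  K_k on l2(I) with sum_k K_k^* K_k = 1, i.e. sum_k ||K_k x||^2 = ||x||^2.\<close>

definition kraus_family :: "(nat \<Rightarrow> ('i \<Rightarrow> complex) \<Rightarrow> ('i \<Rightarrow> complex)) \<Rightarrow> bool" where
  "kraus_family K \<longleftrightarrow>
     (\<forall>k x. l2 x \<longrightarrow> l2 (K k x)) \<and>
     (\<forall>k c x y. l2 x \<longrightarrow> l2 y \<longrightarrow> K k (\<lambda>i. c * x i + y i) = (\<lambda>i. c * K k x i + K k y i)) \<and>
     (\<forall>x. l2 x \<longrightarrow> ((\<lambda>k. (l2norm (K k x))^2) has_sum (l2norm x)^2) UNIV)"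

definition dens :: "('n \<Rightarrow> real) \<Rightarrow> ('n \<Rightarrow> 'i \<Rightarrow> complex) \<Rightarrow> 'i \<Rightarrow> 'i \<Rightarrow> complex" where
  "dens p \<psi> i j = (\<Sum>\<^sub>\<infinity>n. complex_of_real (p n) * \<psi> n i * cnj (\<psi> n j))"

text \<open>Matrix elements of Psi[rho] = sum_k K_k rho K_k^*, with rho = sum_n p n |psi n><psi n|.\<close>

definition apply_kraus ::
  "(nat \<Rightarrow> ('i \<Rightarrow> complex) \<Rightarrow> ('i \<Rightarrow> complex)) \<Rightarrow> ('n \<Rightarrow> real) \<Rightarrow> ('n \<Rightarrow> 'i \<Rightarrow> complex)
     \<Rightarrow> 'i \<Rightarrow> 'i \<Rightarrow> complex" where
  "apply_kraus K p \<psi> i j = (\<Sum>\<^sub>\<infinity>k. dens p (\<lambda>n. K k (\<psi> n)) i j)"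

text \<open>Ambient Hilbert space: two-mode (H/V) bosonic Fock space, basis |m,n> indexed by
  Inl (m,n), direct sum with an auxiliary space l2('e) (basis Inr e).
  A polarization is given by its Jones vector (alpha, beta), and
  |N>_a = (alpha h^+ + beta v^+)^N / sqrt(N!) |0,0>
        = sum_k sqrt(N choose k) alpha^k beta^(N-k) |k, N-k>.\<close>

definition fock_state :: "complex \<times> complex \<Rightarrow> nat \<Rightarrow> (nat \<times> nat) + 'e \<Rightarrow> complex" where
  "fock_state pol N = (\<lambda>idx. case idx of
      Inl (k, m) \<Rightarrow> (if k + m = N
                     then complex_of_real (sqrt (real (N choose k))) * fst pol ^ k * snd pol ^ m
                     else 0)
    | Inr _ \<Rightarrow> 0)"

definition poisson :: "real \<Rightarrow> nat \<Rightarrow> real" where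
  "poisson \<mu> N = exp (- \<mu>) * \<mu> ^ N / fact N"

text \<open>Ensemble for xi: index None = tag state |a,mu>, index Some N = Fock state |N>_a.\<close>

definition xi_weight :: "nat \<Rightarrow> real \<Rightarrow> nat option \<Rightarrow> real" where
  "xi_weight Ndecoy \<mu> o' = (case o' of
      None \<Rightarrow> 1 - (\<Sum>N\<le>Ndecoy. poisson \<mu> N)
    | Some N \<Rightarrow> (if N \<le> Ndecoy then poisson \<mu> N else 0))"

definition xi_states ::
  "('p \<Rightarrow> complex \<times> complex) \<Rightarrow> ('p \<Rightarrow> real \<Rightarrow> (nat \<times> nat) + 'e \<Rightarrow> complex) \<Rightarrow> 'p \<Rightarrow> real
     \<Rightarrow> nat option \<Rightarrow> (nat \<times> nat) + 'e \<Rightarrow> complex" where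
  "xi_states jones tag a \<mu> o' = (case o' of
      None \<Rightarrow> tag a \<mu>
    | Some N \<Rightarrow> fock_state (jones a) N)"

end

theory Submission
  imports Defs
begin

text \<open>
  The channel keeps the orthogonal complement of the tag states |a,mu> untouched and replaces
  each tag |a,mu> by the mixture of the Fock states |N>_a with N > Ndecoy, weighted by the Poisson
  law of intensity mu conditioned on N > Ndecoy. Its Kraus operators are the projection onto that
  complement and the rank-one maps sqrt(q_N) |N>_a <a,mu|; they are complete by Pythagoras,
  because the conditional weights q_N sum to 1. In xi the Fock components with N <= Ndecoy are
  orthogonal to all tags and pass unchanged, while the tag carries exactly the missing Poisson
  mass 1 - sum_(N <= Ndecoy) p_mu(N), so it is turned into the Poisson tail and sigma is restored.
\<close>

section \<open>Square-summable functions\<close>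

lemma l2_zero [simp]: "l2 (\<lambda>i. 0)"
  by (simp add: l2_def)

lemma l2_scale: "l2 x \<Longrightarrow> l2 (\<lambda>i. c * x i)"
  unfolding l2_def by (simp add: norm_mult power_mult_distrib summable_on_cmult_right)

lemma l2_add:
  assumes "l2 x" "l2 y"
  shows "l2 (\<lambda>i. x i + y i)"
proof -
  have "(cmod (x i + y i))^2 \<le> 2 * (cmod (x i))^2 + 2 * (cmod (y i))^2" for i
  proof -
    have "(cmod (x i + y i))^2 \<le> (cmod (x i) + cmod (y i))^2"
      by (simp add: norm_triangle_ineq power_mono)
    also have "\<dots> \<le> 2 * (cmod (x i))^2 + 2 * (cmod (y i))^2"
      using sum_squares_bound[of "cmod (x i)" "cmod (y i)"] by (simp add: power2_sum)
    finally show ?thesis .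
  qed
  moreover have "(\<lambda>i. 2 * (cmod (x i))^2 + 2 * (cmod (y i))^2) summable_on UNIV"
    using assms unfolding l2_def by (intro summable_on_add summable_on_cmult_right)
  ultimately show ?thesis
    unfolding l2_def by (auto intro: summable_on_comparison_test)
qed

lemma l2_diff: "l2 x \<Longrightarrow> l2 y \<Longrightarrow> l2 (\<lambda>i. x i - y i)"
  using l2_add[of x "\<lambda>i. -1 * y i"] l2_scale[of y "-1"] by simp

lemma l2_sum: "(\<And>t. t \<in> F \<Longrightarrow> l2 (f t)) \<Longrightarrow> l2 (\<lambda>i. \<Sum>t\<in>F. f t i)"
  by (induction F rule: infinite_finite_induct) (auto intro: l2_add)

lemma cinner_summable:
  assumes "l2 x" "l2 y"
  shows "(\<lambda>i. cnj (x i) * y i) summable_on UNIV"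
proof (rule abs_summable_summable)
  have "cmod (x i) * cmod (y i) \<le> (cmod (x i))^2 + (cmod (y i))^2" for i
    using sum_squares_bound[of "cmod (x i)" "cmod (y i)"] mult_nonneg_nonneg[OF norm_ge_zero norm_ge_zero, of "x i" "y i"]
    by linarith
  moreover have "(\<lambda>i. (cmod (x i))^2 + (cmod (y i))^2) summable_on UNIV"
    using assms unfolding l2_def by (rule summable_on_add)
  ultimately show "(\<lambda>i. norm (cnj (x i) * y i)) summable_on UNIV"
    by (auto simp: norm_mult intro: summable_on_comparison_test)
qed

lemma cinner_commute: "cinner x y = cnj (cinner y x)"
  unfolding cinner_def by (simp flip: infsum_cnj add: mult.commute)

lemma cinner_add_right:
  "l2 x \<Longrightarrow> l2 y \<Longrightarrow> l2 z \<Longrightarrow> cinner x (\<lambda>i. y i + z i) = cinner x y + cinner x z"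
  unfolding cinner_def by (simp add: distrib_left infsum_add cinner_summable)

lemma cinner_scale_right: "cinner x (\<lambda>i. c * y i) = c * cinner x y"
  unfolding cinner_def by (simp add: mult.left_commute infsum_cmult_right')

lemma cinner_diff_right:
  assumes "l2 x" "l2 y" "l2 z"
  shows "cinner x (\<lambda>i. y i - z i) = cinner x y - cinner x z"
proof -
  have "cinner x (\<lambda>i. y i + (-1) * z i) = cinner x y - cinner x z"
    by (simp only: cinner_add_right assms l2_scale cinner_scale_right) simp
  then show ?thesis by simp
qed

lemma cinner_sum_right:
  "l2 x \<Longrightarrow> (\<And>t. t \<in> F \<Longrightarrow> l2 (f t)) \<Longrightarrow>
     cinner x (\<lambda>i. \<Sum>t\<in>F. f t i) = (\<Sum>t\<in>F. cinner x (f t))"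
  by (induction F rule: infinite_finite_induct)
    (auto simp: cinner_def[of x "\<lambda>i. 0"] cinner_add_right l2_sum)

lemma cinner_self:
  assumes "l2 x"
  shows "cinner x x = (l2norm x)^2"
proof -
  have "((\<lambda>i. (cmod (x i))^2) has_sum (l2norm x)^2) UNIV"
    using assms unfolding l2_def l2norm_def by (simp add: infsum_nonneg)
  then have "((\<lambda>i. complex_of_real ((cmod (x i))^2)) has_sum (l2norm x)^2) UNIV"
    by (metis has_sum_of_real)
  moreover have "cnj (x i) * x i = complex_of_real ((cmod (x i))^2)" for i
    by (metis complex_norm_square mult.commute)
  ultimately show ?thesis
    unfolding cinner_def by (simp add: infsumI)
qed

lemma l2norm_scale: "l2norm (\<lambda>i. c * x i) = cmod c * l2norm x"
  unfolding l2norm_def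
  by (simp add: norm_mult power_mult_distrib infsum_cmult_right' real_sqrt_mult)

lemma cmod_le_l2norm:
  assumes "l2 x"
  shows "cmod (x i) \<le> l2norm x"
proof -
  have "(cmod (x i))^2 \<le> (\<Sum>\<^sub>\<infinity>i. (cmod (x i))^2)"
    using finite_sum_le_infsum[of "\<lambda>i. (cmod (x i))^2" UNIV "{i}"] assms
    unfolding l2_def by simp
  then show ?thesis
    unfolding l2norm_def by (simp add: real_le_rsqrt)
qed

section \<open>Projection onto the complement of a finite orthonormal family\<close>

definition orth_compl_proj ::
  "nat \<Rightarrow> (nat \<Rightarrow> 'i \<Rightarrow> complex) \<Rightarrow> ('i \<Rightarrow> complex) \<Rightarrow> 'i \<Rightarrow> complex" where
  "orth_compl_proj n e x = (\<lambda>i. x i - (\<Sum>j<n. cinner (e j) x * e j i))"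

locale orthonormal_family =
  fixes n :: nat and e :: "nat \<Rightarrow> 'i \<Rightarrow> complex"
  assumes l2_e: "j < n \<Longrightarrow> l2 (e j)"
    and cinner_e: "j < n \<Longrightarrow> j' < n \<Longrightarrow> cinner (e j) (e j') = (if j = j' then 1 else 0)"
begin

lemma sum_cinner_e: "j < n \<Longrightarrow> (\<Sum>j'<n. cinner (e j') (e j) * c j') = c j"
  by (subst sum.remove[of _ j]) (auto simp: cinner_e intro!: sum.neutral)

lemma l2_lincomb_e: "l2 (\<lambda>i. \<Sum>j<n. c j * e j i)"
  by (intro l2_sum l2_scale l2_e) simp

lemma cinner_lincomb_e:
  assumes "l2 x"
  shows "cinner x (\<lambda>i. \<Sum>j<n. c j * e j i) = (\<Sum>j<n. c j * cinner x (e j))"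
  by (subst cinner_sum_right) (auto simp: assms l2_scale l2_e cinner_scale_right)

lemma cinner_e_lincomb_e: "j < n \<Longrightarrow> cinner (e j) (\<lambda>i. \<Sum>j'<n. c j' * e j' i) = c j"
  by (simp add: cinner_lincomb_e l2_e) (subst sum.remove[of _ j], auto simp: cinner_e intro!: sum.neutral)

lemma l2_orth_compl_proj: "l2 x \<Longrightarrow> l2 (orth_compl_proj n e x)"
  unfolding orth_compl_proj_def by (intro l2_diff l2_lincomb_e)

lemma cinner_e_orth_compl_proj: "j < n \<Longrightarrow> l2 x \<Longrightarrow> cinner (e j) (orth_compl_proj n e x) = 0"
  unfolding orth_compl_proj_def
  by (simp add: cinner_diff_right l2_e l2_lincomb_e cinner_e_lincomb_e)

lemma orth_compl_proj_e: "j < n \<Longrightarrow> orth_compl_proj n e (e j) = (\<lambda>i. 0)"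
  unfolding orth_compl_proj_def by (simp add: sum_cinner_e)

lemma orth_compl_proj_orth:
  "(\<And>j. j < n \<Longrightarrow> cinner (e j) x = 0) \<Longrightarrow> orth_compl_proj n e x = x"
  unfolding orth_compl_proj_def by simp

lemma orth_compl_proj_lincomb:
  assumes "l2 x" "l2 y"
  shows "orth_compl_proj n e (\<lambda>i. c * x i + y i)
           = (\<lambda>i. c * orth_compl_proj n e x i + orth_compl_proj n e y i)"
proof -
  have "cinner (e j) (\<lambda>i. c * x i + y i) = c * cinner (e j) x + cinner (e j) y" if "j < n" for j
    using that assms by (simp add: cinner_add_right cinner_scale_right l2_scale l2_e)
  then show ?thesis
    unfolding orth_compl_proj_def
    by (auto simp: algebra_simps sum.distrib sum_distrib_left sum_subtractf)
qed

lemma l2norm_orth_compl_proj: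
  assumes "l2 x"
  shows "(l2norm (orth_compl_proj n e x))^2 = (l2norm x)^2 - (\<Sum>j<n. (cmod (cinner (e j) x))^2)"
proof -
  define y where "y = (\<lambda>i. \<Sum>j<n. cinner (e j) x * e j i)"
  define z where "z = orth_compl_proj n e x"
  have y: "l2 y" unfolding y_def by (rule l2_lincomb_e)
  have z: "l2 z" unfolding z_def using assms by (rule l2_orth_compl_proj)
  have z_eq: "z = (\<lambda>i. x i - y i)" unfolding z_def y_def orth_compl_proj_def ..
  have "cinner z y = (\<Sum>j<n. cinner (e j) x * cinner z (e j))"
    unfolding y_def using z by (rule cinner_lincomb_e)
  also have "\<dots> = 0"
    using cinner_e_orth_compl_proj[OF _ assms] by (simp add: cinner_commute[of z] flip: z_def)
  finally have zy: "cinner z y = 0" .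
  have "cinner z z = cinner z x - cinner z y"
    using cinner_diff_right[OF z assms y] by (simp flip: z_eq)
  also have "\<dots> = cinner z x"
    using zy by simp
  also have "\<dots> = cinner x x - cinner y x"
    using cinner_diff_right[OF assms assms y]
    by (simp add: cinner_commute[of z] cinner_commute[of y x] cinner_self assms flip: z_eq)
  also have "cinner y x = (\<Sum>j<n. (cmod (cinner (e j) x))^2)"
  proof -
    have "cinner x y = (\<Sum>j<n. cinner (e j) x * cinner x (e j))"
      unfolding y_def using assms by (rule cinner_lincomb_e)
    then show ?thesis
      by (simp add: cinner_commute[of y] cinner_commute[of x "e _"] flip: complex_norm_square)
  qed
  finally show ?thesis
    by (simp add: cinner_self z assms flip: z_def of_real_power of_real_sum of_real_diff)
qed

end

section \<open>Channels that replace an orthonormal family by mixed states\<close>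

lemma has_sum_sum:
  fixes f :: "'t \<Rightarrow> 'a \<Rightarrow> 'b::topological_comm_monoid_add"
  shows "(\<And>t. t \<in> F \<Longrightarrow> (f t has_sum s t) A) \<Longrightarrow>
           ((\<lambda>x. \<Sum>t\<in>F. f t x) has_sum (\<Sum>t\<in>F. s t)) A"
  by (induction F rule: infinite_finite_induct) (auto intro: has_sum_add)

lemma has_sum_prod_decode:
  "(f has_sum s) UNIV \<Longrightarrow> ((\<lambda>k. f (prod_decode k)) has_sum s) UNIV"
  using has_sum_reindex_bij_betw[OF bij_prod_decode[unfolded bij_def[symmetric]]] by blast

lemma kraus_family_prod_decode:
  fixes K :: "nat \<times> nat \<Rightarrow> ('i \<Rightarrow> complex) \<Rightarrow> 'i \<Rightarrow> complex"
  assumes "\<And>p x. l2 x \<Longrightarrow> l2 (K p x)"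
    and "\<And>p c x y. l2 x \<Longrightarrow> l2 y \<Longrightarrow> K p (\<lambda>i. c * x i + y i) = (\<lambda>i. c * K p x i + K p y i)"
    and "\<And>x. l2 x \<Longrightarrow> ((\<lambda>p. (l2norm (K p x))^2) has_sum (l2norm x)^2) UNIV"
  shows "kraus_family (\<lambda>k. K (prod_decode k))"
  unfolding kraus_family_def using assms by (auto intro: has_sum_prod_decode)

lemma apply_kraus_finite_ensemble:
  assumes "finite S" "\<And>n. n \<notin> S \<Longrightarrow> p n = 0"
    and "\<And>n. n \<in> S \<Longrightarrow> ((\<lambda>k. K k (\<psi> n) i * cnj (K k (\<psi> n) j)) has_sum \<rho> n) UNIV"
  shows "apply_kraus K p \<psi> i j = (\<Sum>n\<in>S. p n * \<rho> n)"
proof -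
  have "dens p (\<lambda>n. K k (\<psi> n)) i j = (\<Sum>n\<in>S. p n * (K k (\<psi> n) i * cnj (K k (\<psi> n) j)))" for k
    unfolding dens_def using assms(1,2)
    by (intro infsumI has_sum_finite_neutralI) (auto simp: mult.assoc)
  moreover have "((\<lambda>k. \<Sum>n\<in>S. p n * (K k (\<psi> n) i * cnj (K k (\<psi> n) j))) has_sum (\<Sum>n\<in>S. p n * \<rho> n)) UNIV"
    using assms(3) by (intro has_sum_sum has_sum_cmult_right)
  ultimately show ?thesis
    unfolding apply_kraus_def by (simp add: infsumI)
qed

lemma dens_summable:
  assumes "p summable_on UNIV" "\<And>n. 0 \<le> p n" "\<And>n. l2 (\<psi> n)" "\<And>n. l2norm (\<psi> n) \<le> 1"
  shows "(\<lambda>n. complex_of_real (p n) * \<psi> n i * cnj (\<psi> n j)) summable_on UNIV"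
proof (rule abs_summable_summable, rule summable_on_comparison_test[OF assms(1)])
  fix n
  have "cmod (\<psi> n i) \<le> 1" "cmod (\<psi> n j) \<le> 1"
    using cmod_le_l2norm[OF assms(3)] assms(4) order_trans by blast+
  then have "cmod (\<psi> n i) * cmod (\<psi> n j) \<le> 1"
    by (simp add: mult_le_one)
  then show "norm (complex_of_real (p n) * \<psi> n i * cnj (\<psi> n j)) \<le> p n"
    using assms(2)[of n] by (simp add: norm_mult mult.assoc mult_left_le)
qed simp

fun replacement_op ::
  "nat \<Rightarrow> (nat \<Rightarrow> 'i \<Rightarrow> complex) \<Rightarrow> (nat \<Rightarrow> nat \<Rightarrow> real) \<Rightarrow> (nat \<Rightarrow> nat \<Rightarrow> 'i \<Rightarrow> complex)
     \<Rightarrow> nat \<times> nat \<Rightarrow> ('i \<Rightarrow> complex) \<Rightarrow> 'i \<Rightarrow> complex" where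
  "replacement_op n e q v (0, 0) = orth_compl_proj n e"
| "replacement_op n e q v (0, Suc _) = (\<lambda>x i. 0)"
| "replacement_op n e q v (Suc j, N) =
     (if j < n then (\<lambda>x i. complex_of_real (sqrt (q j N)) * cinner (e j) x * v j N i) else (\<lambda>x i. 0))"

locale replacement_channel = orthonormal_family n e
  for n :: nat and e :: "nat \<Rightarrow> 'i \<Rightarrow> complex" +
  fixes q :: "nat \<Rightarrow> nat \<Rightarrow> real" and v :: "nat \<Rightarrow> nat \<Rightarrow> 'i \<Rightarrow> complex"
  assumes q_nonneg: "j < n \<Longrightarrow> 0 \<le> q j N"
    and q_has_sum: "j < n \<Longrightarrow> (q j has_sum 1) UNIV"
    and l2_v: "j < n \<Longrightarrow> l2 (v j N)"
    and l2norm_v: "j < n \<Longrightarrow> l2norm (v j N) = 1"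
begin

lemma l2_replacement_op: "l2 x \<Longrightarrow> l2 (replacement_op n e q v p x)"
  by (cases "(n, e, q, v, p)" rule: replacement_op.cases) (auto simp: l2_orth_compl_proj l2_scale l2_v)

lemma replacement_op_lincomb:
  assumes "l2 x" "l2 y"
  shows "replacement_op n e q v p (\<lambda>i. c * x i + y i)
           = (\<lambda>i. c * replacement_op n e q v p x i + replacement_op n e q v p y i)"
  using assms
  by (cases "(n, e, q, v, p)" rule: replacement_op.cases)
    (simp add: orth_compl_proj_lincomb, simp,
     auto simp: cinner_add_right cinner_scale_right l2_scale l2_e algebra_simps)

lemma has_sum_l2norm_replacement_op:
  assumes x: "l2 x"
  shows "((\<lambda>p. (l2norm (replacement_op n e q v p x))^2) has_sum (l2norm x)^2) UNIV"
proof -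
  define f where "f p = (l2norm (replacement_op n e q v p x))^2" for p
  define rows where "rows = (\<Union>j<n. Pair (Suc j) ` (UNIV :: nat set))"
  have "(f has_sum (cmod (cinner (e j) x))^2) (Pair (Suc j) ` (UNIV :: nat set))" if "j < n" for j
  proof -
    have "f (Suc j, N) = q j N * (cmod (cinner (e j) x))^2" for N
      using that q_nonneg[OF that] by (simp add: f_def l2norm_scale l2norm_v norm_mult power_mult_distrib)
    moreover have "((\<lambda>N. q j N * (cmod (cinner (e j) x))^2) has_sum (cmod (cinner (e j) x))^2) UNIV"
      using has_sum_cmult_left[OF q_has_sum[OF that]] by simp
    ultimately show ?thesis
      by (subst has_sum_reindex) (auto simp: inj_on_def o_def)
  qed
  then have "(f has_sum (\<Sum>j<n. (cmod (cinner (e j) x))^2)) rows"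
    unfolding rows_def by (intro sum_has_sum) auto
  moreover have "(f has_sum (l2norm x)^2 - (\<Sum>j<n. (cmod (cinner (e j) x))^2)) {(0, 0)}"
    using l2norm_orth_compl_proj[OF x] by (intro has_sum_finiteI) (simp_all add: f_def)
  moreover have "{(0, 0)} \<inter> rows = {}"
    unfolding rows_def by auto
  ultimately have "(f has_sum (l2norm x)^2) ({(0, 0)} \<union> rows)"
    using has_sum_Un_disjoint[where A = "{(0, 0)}" and B = rows] by fastforce
  moreover have "f p = 0" if "p \<notin> {(0, 0)} \<union> rows" for p
    using that by (cases "(n, e, q, v, p)" rule: replacement_op.cases) (auto simp: f_def rows_def l2norm_def)
  ultimately show ?thesis
    unfolding f_def[symmetric] by (subst has_sum_cong_neutral[where T = "{(0, 0)} \<union> rows"]) auto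
qed

lemma kraus_family_replacement_op: "kraus_family (\<lambda>k. replacement_op n e q v (prod_decode k))"
  by (intro kraus_family_prod_decode l2_replacement_op replacement_op_lincomb
      has_sum_l2norm_replacement_op)

lemma has_sum_replacement_op_orth:
  assumes "\<And>j. j < n \<Longrightarrow> cinner (e j) x = 0"
  shows "((\<lambda>p. replacement_op n e q v p x i * cnj (replacement_op n e q v p x i'))
            has_sum x i * cnj (x i')) UNIV"
proof (rule has_sum_finite_neutralI[where B = "{(0, 0)}"])
  fix p :: "nat \<times> nat"
  assume "p \<in> UNIV - {(0, 0)}"
  then show "replacement_op n e q v p x i * cnj (replacement_op n e q v p x i') = 0"
    using assms by (cases "(n, e, q, v, p)" rule: replacement_op.cases) auto
qed (simp_all add: orth_compl_proj_orth assms)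

lemma has_sum_replacement_op_e:
  assumes j: "j < n"
    and s: "((\<lambda>N. complex_of_real (q j N) * v j N i * cnj (v j N i')) has_sum s) UNIV"
  shows "((\<lambda>p. replacement_op n e q v p (e j) i * cnj (replacement_op n e q v p (e j) i'))
            has_sum s) UNIV"
proof -
  define f where "f p = replacement_op n e q v p (e j) i * cnj (replacement_op n e q v p (e j) i')" for p
  have "f (Suc j, N) = complex_of_real (q j N) * v j N i * cnj (v j N i')" for N
    using j q_nonneg[OF j, of N] cinner_e[OF j j]
    by (simp add: f_def algebra_simps flip: of_real_mult)
  with s have "(f has_sum s) (Pair (Suc j) ` (UNIV :: nat set))"
    by (subst has_sum_reindex) (auto simp: inj_on_def o_def)
  moreover have "f p = 0" if "p \<notin> Pair (Suc j) ` (UNIV :: nat set)" for p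
    using that j by (cases "(n, e, q, v, p)" rule: replacement_op.cases) (auto simp: f_def orth_compl_proj_e cinner_e)
  ultimately show ?thesis
    unfolding f_def[symmetric] by (subst has_sum_cong_neutral[where T = "Pair (Suc j) ` (UNIV :: nat set)"]) auto
qed

end

section \<open>Fock states, Poisson weights and the tagging channel\<close>

lemma fock_state_support: "fock_state pol N i \<noteq> 0 \<Longrightarrow> i \<in> (\<lambda>k. Inl (k, N - k)) ` {..N}"
  unfolding fock_state_def by (auto split: sum.splits if_splits)

lemma l2_fock_state: "l2 (fock_state pol N)"
  unfolding l2_def
  by (rule has_sum_imp_summable, rule has_sum_finite_neutralI[where B = "(\<lambda>k. Inl (k, N - k)) ` {..N}"])
    (use fock_state_support[of pol N] in auto)

lemma l2norm_fock_state:
  assumes "(cmod (fst pol))^2 + (cmod (snd pol))^2 = 1"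
  shows "l2norm (fock_state pol N :: (nat \<times> nat) + 'e \<Rightarrow> complex) = 1"
proof -
  define F :: "(nat \<times> nat) + 'e \<Rightarrow> complex" where "F = fock_state pol N"
  define A :: "((nat \<times> nat) + 'e) set" where "A = (\<lambda>k. Inl (k, N - k)) ` {..N}"
  have "((\<lambda>i. (cmod (F i))^2) has_sum (\<Sum>i\<in>A. (cmod (F i))^2)) UNIV"
    by (rule has_sum_finite_neutralI[where B = A])
      (use fock_state_support[of pol N] in \<open>auto simp: A_def F_def\<close>)
  moreover have "(\<Sum>i\<in>A. (cmod (F i))^2)
      = (\<Sum>k\<le>N. real (N choose k) * ((cmod (fst pol))^2)^k * ((cmod (snd pol))^2)^(N - k))"
    unfolding A_def
    by (subst sum.reindex) (auto simp: inj_on_def F_def fock_state_def norm_mult norm_power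
        power_mult_distrib power_mult[symmetric] mult.commute[of 2] intro!: sum.cong)
  moreover have "\<dots> = 1"
    using binomial_ring[of "(cmod (fst pol))^2" "(cmod (snd pol))^2" N] assms by simp
  ultimately show ?thesis
    unfolding l2norm_def F_def by (simp add: infsumI)
qed

lemma poisson_nonneg: "0 \<le> \<mu> \<Longrightarrow> 0 \<le> poisson \<mu> N"
  unfolding poisson_def by simp

lemma poisson_has_sum:
  assumes "0 \<le> \<mu>"
  shows "(poisson \<mu> has_sum 1) UNIV"
proof -
  have "(\<lambda>N. exp (- \<mu>) * (\<mu> ^ N /\<^sub>R fact N)) sums (exp (- \<mu>) * exp \<mu>)"
    by (intro sums_mult exp_converges)
  moreover have "(\<lambda>N. exp (- \<mu>) * (\<mu> ^ N /\<^sub>R fact N)) = poisson \<mu>"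
    by (auto simp: poisson_def field_simps)
  ultimately have "poisson \<mu> sums 1"
    by (simp flip: exp_add)
  then show ?thesis
    using assms by (intro sums_nonneg_imp_has_sum poisson_nonneg)
qed

lemma poisson_partial_sum_less_1:
  assumes "0 < \<mu>"
  shows "(\<Sum>N\<le>Nd. poisson \<mu> N) < 1"
proof -
  have "(\<Sum>N\<le>Suc Nd. poisson \<mu> N) \<le> 1"
    using assms by (intro finite_sum_le_has_sum[OF poisson_has_sum]) (auto intro: poisson_nonneg)
  moreover have "0 < poisson \<mu> (Suc Nd)"
    using assms by (simp add: poisson_def)
  ultimately show ?thesis
    by simp
qed

definition poisson_tail :: "nat \<Rightarrow> real \<Rightarrow> nat \<Rightarrow> real" where
  "poisson_tail Nd \<mu> N = (if Nd < N then poisson \<mu> N / (1 - (\<Sum>M\<le>Nd. poisson \<mu> M)) else 0)"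

lemma poisson_tail_nonneg: "0 < \<mu> \<Longrightarrow> 0 \<le> poisson_tail Nd \<mu> N"
  using poisson_partial_sum_less_1[of \<mu> Nd] by (simp add: poisson_tail_def poisson_nonneg)

lemma poisson_tail_has_sum:
  assumes "0 < \<mu>"
  shows "(poisson_tail Nd \<mu> has_sum 1) UNIV"
proof -
  define P where "P = (\<Sum>M\<le>Nd. poisson \<mu> M)"
  have "P < 1"
    unfolding P_def using assms by (rule poisson_partial_sum_less_1)
  have "(poisson \<mu> has_sum 1 - P) (UNIV - {..Nd})"
    unfolding P_def using assms by (intro has_sum_Diff poisson_has_sum) auto
  then have "((\<lambda>N. poisson \<mu> N / (1 - P)) has_sum 1) (UNIV - {..Nd})"
    using has_sum_cmult_left[where c = "1 / (1 - P)"] \<open>P < 1\<close> by fastforce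
  then show ?thesis
    by (subst has_sum_cong_neutral[where T = "UNIV - {..Nd}"]) (auto simp: poisson_tail_def P_def)
qed

lemma has_sum_poisson_tail_dens:
  assumes \<mu>: "0 < \<mu>" and F: "\<And>N. l2 (F N)" "\<And>N. l2norm (F N) \<le> 1"
  shows "((\<lambda>N. complex_of_real (poisson_tail Nd \<mu> N) * F N i * cnj (F N i')) has_sum
           (dens (poisson \<mu>) F i i' - (\<Sum>N\<le>Nd. complex_of_real (poisson \<mu> N) * F N i * cnj (F N i')))
             / (1 - (\<Sum>N\<le>Nd. poisson \<mu> N))) UNIV"
proof -
  define P where "P = (\<Sum>N\<le>Nd. poisson \<mu> N)"
  define Q where "Q N = complex_of_real (poisson \<mu> N) * F N i * cnj (F N i')" for N
  have "(Q has_sum dens (poisson \<mu>) F i i') UNIV"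
    using F \<mu> poisson_has_sum[of \<mu>] unfolding Q_def dens_def
    by (intro has_sum_infsum dens_summable) (auto intro: poisson_nonneg has_sum_imp_summable)
  then have "(Q has_sum dens (poisson \<mu>) F i i' - sum Q {..Nd}) (UNIV - {..Nd})"
    by (intro has_sum_Diff) auto
  then have "((\<lambda>N. Q N / (1 - P)) has_sum (dens (poisson \<mu>) F i i' - sum Q {..Nd}) / (1 - P))
               (UNIV - {..Nd})"
    by (simp add: divide_inverse has_sum_cmult_left)
  then show ?thesis
    unfolding Q_def P_def
    by (subst has_sum_cong_neutral[where T = "UNIV - {..Nd}"]) (auto simp: poisson_tail_def)
qed

lemma apply_kraus_replacement_xi:
  fixes tag :: "'p \<Rightarrow> real \<Rightarrow> (nat \<times> nat) + 'e \<Rightarrow> complex"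
  assumes "replacement_channel n e q v"
    and j: "j < n" "e j = tag a \<mu>" "q j = poisson_tail Nd \<mu>" "v j = fock_state (jones a)"
    and orth: "\<And>j' N. j' < n \<Longrightarrow> N \<le> Nd \<Longrightarrow> cinner (e j') (fock_state (jones a) N) = 0"
    and \<mu>: "0 < \<mu>"
  shows "apply_kraus (\<lambda>k. replacement_op n e q v (prod_decode k)) (xi_weight Nd \<mu>) (xi_states jones tag a \<mu>)
           = dens (poisson \<mu>) (\<lambda>N. fock_state (jones a) N)"
proof (intro ext)
  interpret replacement_channel n e q v by fact
  fix i i'
  define F :: "nat \<Rightarrow> (nat \<times> nat) + 'e \<Rightarrow> complex" where "F = fock_state (jones a)"
  define P where "P = (\<Sum>N\<le>Nd. poisson \<mu> N)"
  define D where "D = dens (poisson \<mu>) F i i'"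
  define S where "S = (\<Sum>N\<le>Nd. complex_of_real (poisson \<mu> N) * F N i * cnj (F N i'))"
  have tail: "((\<lambda>N. complex_of_real (q j N) * v j N i * cnj (v j N i')) has_sum (D - S) / (1 - P)) UNIV"
    using has_sum_poisson_tail_dens[OF \<mu>, of F Nd i i'] l2_v[OF j(1)] l2norm_v[OF j(1)]
    by (simp add: j(3,4) F_def D_def S_def P_def)
  define \<rho> where "\<rho> o' = (case o' of None \<Rightarrow> (D - S) / (1 - P) | Some N \<Rightarrow> F N i * cnj (F N i'))" for o'
  have "apply_kraus (\<lambda>k. replacement_op n e q v (prod_decode k)) (xi_weight Nd \<mu>) (xi_states jones tag a \<mu>) i i'
          = (\<Sum>o'\<in>insert None (Some ` {..Nd}). complex_of_real (xi_weight Nd \<mu> o') * \<rho> o')"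
  proof (rule apply_kraus_finite_ensemble)
    fix o' assume "o' \<in> insert None (Some ` {..Nd})"
    then show "((\<lambda>k. replacement_op n e q v (prod_decode k) (xi_states jones tag a \<mu> o') i
                    * cnj (replacement_op n e q v (prod_decode k) (xi_states jones tag a \<mu> o') i'))
                 has_sum \<rho> o') UNIV"
      using tail orth by (auto simp: xi_states_def \<rho>_def F_def j(2)[symmetric]
          intro!: has_sum_prod_decode has_sum_replacement_op_e[OF j(1)] has_sum_replacement_op_orth)
  qed (auto simp: xi_weight_def)
  also have "\<dots> = (1 - P) * ((D - S) / (1 - P)) + S"
    by (simp add: xi_weight_def \<rho>_def P_def S_def sum.reindex mult.assoc)
  also have "\<dots> = D"
    using poisson_partial_sum_less_1[OF \<mu>, of Nd] by (simp flip: P_def)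
  finally show "apply_kraus (\<lambda>k. replacement_op n e q v (prod_decode k)) (xi_weight Nd \<mu>)
                  (xi_states jones tag a \<mu>) i i' = dens (poisson \<mu>) (\<lambda>N. fock_state (jones a) N) i i'"
    by (simp add: D_def F_def)
qed

lemma replacement_channel_tags:
  fixes tag :: "'p \<Rightarrow> real \<Rightarrow> (nat \<times> nat) + 'e \<Rightarrow> complex"
  assumes g: "bij_betw g {..<n} (UNIV \<times> Mu)"
    and jones_unit: "\<And>a. (cmod (fst (jones a)))^2 + (cmod (snd (jones a)))^2 = 1"
    and Mu_pos: "\<And>\<mu>. \<mu> \<in> Mu \<Longrightarrow> 0 < \<mu>"
    and tag_l2: "\<And>a \<mu>. \<mu> \<in> Mu \<Longrightarrow> l2 (tag a \<mu>)"
    and tag_on: "\<And>a b \<mu> \<nu>. \<mu> \<in> Mu \<Longrightarrow> \<nu> \<in> Mu \<Longrightarrow>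
                   cinner (tag a \<mu>) (tag b \<nu>) = (if a = b \<and> \<mu> = \<nu> then 1 else 0)"
  shows "replacement_channel n (\<lambda>j. tag (fst (g j)) (snd (g j))) (\<lambda>j. poisson_tail Nd (snd (g j)))
           (\<lambda>j. fock_state (jones (fst (g j))))"
proof -
  have Mu: "snd (g j) \<in> Mu" if "j < n" for j
    using bij_betw_apply[OF g] that by force
  have "g j = g j' \<longleftrightarrow> j = j'" if "j < n" "j' < n" for j j'
    using g that unfolding bij_betw_def inj_on_def by auto
  then show ?thesis
    using Mu tag_l2 tag_on Mu_pos jones_unit
    by unfold_locales (auto simp: prod_eq_iff l2_fock_state l2norm_fock_state
        poisson_tail_nonneg poisson_tail_has_sum)
qed

theorem mainTheorem11:
  fixes jones :: "'p::finite \<Rightarrow> complex \<times> complex"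
    and Mu :: "real set"
    and Ndecoy :: nat
    and tag :: "'p \<Rightarrow> real \<Rightarrow> (nat \<times> nat) + ('e::countable) \<Rightarrow> complex"
  assumes jones_unit: "\<forall>a. (cmod (fst (jones a)))^2 + (cmod (snd (jones a)))^2 = 1"
    and Mu_fin: "finite Mu"
    and Mu_pos: "\<forall>\<mu>\<in>Mu. \<mu> > 0"
    and tag_l2: "\<forall>a \<mu>. \<mu> \<in> Mu \<longrightarrow> l2 (tag a \<mu>)"
    and tag_on: "\<forall>a b \<mu> \<nu>. \<mu> \<in> Mu \<longrightarrow> \<nu> \<in> Mu \<longrightarrow>
                   cinner (tag a \<mu>) (tag b \<nu>) = (if a = b \<and> \<mu> = \<nu> then 1 else 0)"
    and tag_orth: "\<forall>a b N \<nu>. N \<le> Ndecoy \<longrightarrow> \<nu> \<in> Mu \<longrightarrow>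
                   cinner (fock_state (jones a) N) (tag b \<nu>) = 0"
  shows "\<exists>K. kraus_family K \<and>
           (\<forall>a \<mu> (z::'z). \<mu> \<in> Mu \<longrightarrow>
              apply_kraus K (xi_weight Ndecoy \<mu>) (xi_states jones tag a \<mu>)
                = dens (poisson \<mu>) (\<lambda>N. fock_state (jones a) N))"
proof -
  define n where "n = card ((UNIV :: 'p set) \<times> Mu)"
  have "finite ((UNIV :: 'p set) \<times> Mu)"
    using Mu_fin by simp
  then obtain g where g: "bij_betw g {..<n} ((UNIV :: 'p set) \<times> Mu)"
    unfolding n_def atLeast0LessThan[symmetric] by (rule ex_bij_betw_nat_finite[THEN exE])
  define e where "e j = tag (fst (g j)) (snd (g j))" for j
  define q where "q j = poisson_tail Ndecoy (snd (g j))" for j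
  define v :: "nat \<Rightarrow> nat \<Rightarrow> (nat \<times> nat) + 'e \<Rightarrow> complex"
    where "v j = fock_state (jones (fst (g j)))" for j
  have chan: "replacement_channel n e q v"
    unfolding e_def q_def v_def using g assms by (intro replacement_channel_tags) auto
  show ?thesis
  proof (intro exI conjI allI impI)
    show "kraus_family (\<lambda>k. replacement_op n e q v (prod_decode k))"
      using chan by (rule replacement_channel.kraus_family_replacement_op)
    fix a \<mu> assume "\<mu> \<in> Mu"
    then have "(a, \<mu>) \<in> g ` {..<n}"
      using g by (simp add: bij_betw_def)
    then obtain j where j: "j < n" "g j = (a, \<mu>)"
      by (metis imageE lessThan_iff)
    have Mu: "snd (g j') \<in> Mu" if "j' < n" for j'
      using bij_betw_apply[OF g] that by force
    show "apply_kraus (\<lambda>k. replacement_op n e q v (prod_decode k)) (xi_weight Ndecoy \<mu>)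
            (xi_states jones tag a \<mu>) = dens (poisson \<mu>) (\<lambda>N. fock_state (jones a) N)"
      by (rule apply_kraus_replacement_xi[OF chan j(1)])
        (use j Mu tag_orth Mu_pos \<open>\<mu> \<in> Mu\<close> in \<open>auto simp: e_def q_def v_def cinner_commute[of "tag _ _"]\<close>)
  qed
qed

end
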